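(* Under the same setting as follows: let $\Sigma \subset \mathbb{R}^N$ be proximinal, $A \in \mathbb{R}^{m\times N}$, $\hat{x} \in \Sigma$, $e \in \mathbb{R}^m$, $y = A\hat{x}+e$, $\mu>0$, $\lambda \in [0,1]$, $\eta \ge 0$, and $P_\Sigma$ a generalized projection onto $\Sigma$ with $\beta = \beta_\Sigma(P_\Sigma) < \infty$ such that for every $z$ and every $u \in P_\Sigma(z)$ there is $w \in P^\perp_\Sigma(z)$ with $\|u-w\|_2 \le \eta$. Let $\delta = \delta_\Sigma(\mu A^TA)$. For any $x \in \mathbb{R}^N$, any $p \in P_\Sigma(x)$, $z = (1-\lambda)x + \lambda p$ and $x^+ = z - \mu A^T(Az - y)$, we have $$\|x^+ - \hat{x}\|_2 \le \big(\delta\beta + |1-\lambda|\,\|I-\mu A^TA\|_{\mathrm{op}}\big)\|x - \hat{x}\|_2 + |1-\lambda|\,\|I-\mu A^TA\|_{\mathrm{op}}\,\eta + \mu\|A^Te\|_2.$$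
   Context: Secant set: $\Sigma - \Sigma = \{x_1 - x_2 : x_1, x_2 \in \Sigma\}$. Restricted isometry constant: for a matrix $B \in \mathbb{R}^{N\times N}$, $\delta_\Sigma(B)$ is the smallest $\delta \ge 0$ such that $\|(I-B)(x_1-x_2)\|_2 \le \delta\|x_1-x_2\|_2$ for all $x_1,x_2 \in \Sigma$. A generalized projection onto $\Sigma$ is a (set-valued) map $P$ with $P(z) \subset \Sigma$ (nonempty) for every $z \in \mathbb{R}^N$. $\Sigma$ is proximinal if $\arg\min_{x\in\Sigma}\|x-z\|_2 \neq \emptyset$ for all $z$, and then the orthogonal projection is the set-valued map $P^\perp_\Sigma(z) = \arg\min_{x\in\Sigma}\|x-z\|_2$. Restricted Lipschitz constant: $\beta_\Sigma(P)$ is the smallest $\beta$ such that $\|u - x\|_2 \le \beta\|z - x\|_2$ for all $z \in \mathbb{R}^N$, $x \in \Sigma$, $u \in P(z)$. $\|\cdot\|_{\mathrm{op}}$ is the operator norm induced by $\|\cdot\|_2$. *)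

theory Defs
  imports "HOL-Analysis.Analysis"
begin

definition orth_proj :: "(real^'n) set \<Rightarrow> real^'n \<Rightarrow> (real^'n) set" where
  "orth_proj S z = {x \<in> S. \<forall>x'\<in>S. norm (x - z) \<le> norm (x' - z)}"

definition proximinal :: "(real^'n) set \<Rightarrow> bool" where
  "proximinal S \<longleftrightarrow> (\<forall>z. orth_proj S z \<noteq> {})"

definition gen_proj :: "(real^'n) set \<Rightarrow> (real^'n \<Rightarrow> (real^'n) set) \<Rightarrow> bool" where
  "gen_proj S P \<longleftrightarrow> (\<forall>z. P z \<subseteq> S \<and> P z \<noteq> {})"

definition ric :: "(real^'n) set \<Rightarrow> real^'n^'n \<Rightarrow> real" where
  "ric S B = Inf {d. d \<ge> 0 \<and> (\<forall>x1\<in>S. \<forall>x2\<in>S.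
      norm ((mat 1 - B) *v (x1 - x2)) \<le> d * norm (x1 - x2))}"

definition rlip_set :: "(real^'n) set \<Rightarrow> (real^'n \<Rightarrow> (real^'n) set) \<Rightarrow> real set" where
  "rlip_set S P = {b. \<forall>z. \<forall>x\<in>S. \<forall>u\<in>P z. norm (u - x) \<le> b * norm (z - x)}"

definition rlip :: "(real^'n) set \<Rightarrow> (real^'n \<Rightarrow> (real^'n) set) \<Rightarrow> real" where
  "rlip S P = Inf (rlip_set S P)"

end

theory Submission
  imports Defs
begin

text \<open>
  With \<open>M = \<mu> A\<^sup>T A\<close> and \<open>y = A x\<^sub>0 + e\<close> one has
  \<open>x\<^sup>+ - x\<^sub>0 = (I - M)(p - x\<^sub>0) + (1 - \<lambda>)(I - M)(x - p) + \<mu> A\<^sup>T e\<close>.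
  Since \<open>p, x\<^sub>0 \<in> \<Sigma>\<close>, the first term is bounded by \<open>\<delta> \<parallel>p - x\<^sub>0\<parallel> \<le> \<delta> \<beta> \<parallel>x - x\<^sub>0\<parallel>\<close>;
  the second by \<open>\<bar>1 - \<lambda>\<bar> \<parallel>I - M\<parallel> \<parallel>x - p\<parallel>\<close>, and \<open>\<parallel>x - p\<parallel> \<le> \<parallel>x - x\<^sub>0\<parallel> + \<eta>\<close>
  because \<open>p\<close> is \<open>\<eta>\<close>-close to a best approximation of \<open>x\<close> in \<open>\<Sigma>\<close>.
\<close>

lemma le_cInf_mult_right:
  fixes D :: "real set"
  assumes "D \<noteq> {}" and "\<And>d. d \<in> D \<Longrightarrow> a \<le> d * n" and "0 \<le> n"
  shows "a \<le> Inf D * n"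
proof (cases "n = 0")
  case True
  with assms show ?thesis by fastforce
next
  case False
  with assms(3) have "n > 0" by simp
  with assms(2) have "a / n \<le> Inf D"
    by (intro cInf_greatest[OF assms(1)]) (simp add: divide_le_eq)
  with \<open>n > 0\<close> show ?thesis by (simp add: divide_le_eq)
qed

lemma onorm_matrix_in_ric_set:
  fixes B :: "real^'n^'n"
  shows "onorm (\<lambda>v. (mat 1 - B) *v v) \<in> {d. d \<ge> 0 \<and> (\<forall>x1\<in>S. \<forall>x2\<in>S.
           norm ((mat 1 - B) *v (x1 - x2)) \<le> d * norm (x1 - x2))}"
  using onorm_pos_le onorm by (auto intro: matrix_vector_mul_bounded_linear)

lemma ric_nonneg: "0 \<le> ric S B"
  unfolding ric_def using onorm_matrix_in_ric_set[of B S] by (intro cInf_greatest) auto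

lemma norm_ric_le:
  assumes "x1 \<in> S" and "x2 \<in> S"
  shows "norm ((mat 1 - B) *v (x1 - x2)) \<le> ric S B * norm (x1 - x2)"
  unfolding ric_def using onorm_matrix_in_ric_set[of B S] assms
  by (intro le_cInf_mult_right) auto

lemma norm_gen_proj_le_rlip:
  assumes "rlip_set S P \<noteq> {}" and "x \<in> S" and "u \<in> P z"
  shows "norm (u - x) \<le> rlip S P * norm (z - x)"
  unfolding rlip_def using assms by (intro le_cInf_mult_right) (auto simp: rlip_set_def)

lemma norm_ric_gen_proj_le:
  assumes "gen_proj S P" and "rlip_set S P \<noteq> {}" and "xhat \<in> S" and "p \<in> P x"
  shows "norm ((mat 1 - B) *v (p - xhat)) \<le> ric S B * rlip S P * norm (x - xhat)"
proof -
  have "p \<in> S" using assms(1,4) unfolding gen_proj_def by blast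
  then have "norm ((mat 1 - B) *v (p - xhat)) \<le> ric S B * norm (p - xhat)"
    using assms(3) by (rule norm_ric_le)
  also have "\<dots> \<le> ric S B * (rlip S P * norm (x - xhat))"
    using norm_gen_proj_le_rlip[OF assms(2-4)] ric_nonneg by (rule mult_left_mono)
  finally show ?thesis by (simp add: mult.assoc)
qed

lemma norm_diff_near_orth_proj_le:
  assumes "w \<in> orth_proj S z" and "norm (u - w) \<le> eta" and "x \<in> S"
  shows "norm (z - u) \<le> norm (z - x) + eta"
proof -
  have "norm (w - z) \<le> norm (x - z)" using assms(1,3) unfolding orth_proj_def by blast
  then show ?thesis
    using assms(2) norm_triangle_ineq[of "z - w" "w - u"] by (simp add: norm_minus_commute)
qed

lemma relaxed_gradient_step_error:
  fixes A :: "real^'n^'m" and mu lam :: real and x p xhat :: "real^'n"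
  defines "M \<equiv> mu *\<^sub>R (transpose A ** A)"
  defines "z \<equiv> (1 - lam) *\<^sub>R x + lam *\<^sub>R p"
  shows "z - mu *\<^sub>R (transpose A *v (A *v z - (A *v xhat + e))) - xhat
    = (mat 1 - M) *v (p - xhat) + (1 - lam) *\<^sub>R ((mat 1 - M) *v (x - p))
      + mu *\<^sub>R (transpose A *v e)"
proof -
  have "M *v v = mu *\<^sub>R (transpose A *v (A *v v))" for v
    unfolding M_def by (simp add: scaleR_matrix_vector_assoc matrix_vector_mul_assoc)
  then show ?thesis
    unfolding z_def by (simp add: matrix_vector_mult_diff_rdistrib algebra_simps)
qed

theorem mainTheorem2:
  fixes S :: "(real^'n) set" and A :: "real^'n^'m" and xhat x p :: "real^'n"
    and e :: "real^'m" and mu lam eta :: real and P :: "real^'n \<Rightarrow> (real^'n) set"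
  assumes "proximinal S" and "xhat \<in> S" and "mu > 0" and "0 \<le> lam" and "lam \<le> 1"
    and "eta \<ge> 0" and "gen_proj S P" and "rlip_set S P \<noteq> {}"
    and "\<forall>z. \<forall>u\<in>P z. \<exists>w\<in>orth_proj S z. norm (u - w) \<le> eta"
    and "p \<in> P x"
  shows "let y = A *v xhat + e;
             M = mu *\<^sub>R (transpose A ** A);
             \<delta> = ric S M; \<beta> = rlip S P;
             L = onorm (\<lambda>v. (mat 1 - M) *v v);
             z = (1 - lam) *\<^sub>R x + lam *\<^sub>R p;
             xp = z - mu *\<^sub>R (transpose A *v (A *v z - y))
         in norm (xp - xhat) \<le> (\<delta> * \<beta> + \<bar>1 - lam\<bar> * L) * norm (x - xhat)
              + \<bar>1 - lam\<bar> * L * eta + mu * norm (transpose A *v e)"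
proof -
  define M where "M = mu *\<^sub>R (transpose A ** A)"
  define L where "L = onorm (\<lambda>v. (mat 1 - M) *v v)"
  have first: "norm ((mat 1 - M) *v (p - xhat)) \<le> ric S M * rlip S P * norm (x - xhat)"
    using assms(7,8,2,10) by (rule norm_ric_gen_proj_le)
  obtain w where "w \<in> orth_proj S x" and "norm (p - w) \<le> eta" using assms(9,10) by blast
  then have "norm (x - p) \<le> norm (x - xhat) + eta"
    using assms(2) by (rule norm_diff_near_orth_proj_le)
  moreover have "norm ((mat 1 - M) *v (x - p)) \<le> L * norm (x - p)" and "0 \<le> L"
    unfolding L_def using onorm onorm_pos_le by (auto intro: matrix_vector_mul_bounded_linear)
  ultimately have "norm ((mat 1 - M) *v (x - p)) \<le> L * (norm (x - xhat) + eta)"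
    by (meson mult_left_mono order_trans)
  then have second: "norm ((1 - lam) *\<^sub>R ((mat 1 - M) *v (x - p)))
      \<le> \<bar>1 - lam\<bar> * (L * (norm (x - xhat) + eta))"
    by (simp add: mult_left_mono)
  have third: "norm (mu *\<^sub>R (transpose A *v e)) = mu * norm (transpose A *v e)"
    using assms(3) by simp
  have "norm ((mat 1 - M) *v (p - xhat) + (1 - lam) *\<^sub>R ((mat 1 - M) *v (x - p))
      + mu *\<^sub>R (transpose A *v e))
    \<le> ric S M * rlip S P * norm (x - xhat) + \<bar>1 - lam\<bar> * (L * (norm (x - xhat) + eta))
      + mu * norm (transpose A *v e)"
    using first second third by (intro norm_triangle_le add_mono norm_triangle_ineq) auto
  then show ?thesis
    unfolding Let_def relaxed_gradient_step_error M_def[symmetric] L_def[symmetric]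
    by (simp add: algebra_simps)
qed

end
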